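(* Fix $i\in\{0,1\}$. Let $G$ be a connected graph with $n$ vertices and matching number $k$. If $2\le k<\lfloor n/2\rfloor$, then $\sigma_i(G)\le f_i(n,2k)$, with equality for every double-broom with $n$ vertices and diameter $2k$. If $k=\lfloor n/2\rfloor$, then $\sigma_i(G)\le\sigma_i(P_n)$, with equality if and only if $G=P_n$.
   Context: All graphs are finite, simple, undirected. For a connected graph $G$ and $u\in V(G)$, $\varepsilon_G(u)=\max_v d_G(u,v)$; $\sigma_0(G)=\frac1{|V(G)|}\sum_u\varepsilon_G(u)$, $\sigma_1(G)=\sum_u\varepsilon_G(u)^2$. The matching number is the maximum number of pairwise disjoint edges. $P_n$ is the path on $n$ vertices. A double-broom is a tree obtained from a path by attaching leaves to each of its two end vertices (possibly zero leaves). For integers $n>d\ge2$: $f_0(n,d)=d-\frac1n\lfloor d^2/4\rfloor$ and $f_1(n,d)=nd^2-\frac{5d}{12}(d^2-1)-\epsilon_d$, where $\epsilon_d=d/4$ if $d$ is even and $\epsilon_d=0$ if $d$ is odd (these are the values of $\sigma_0$, $\sigma_1$ on $n$-vertex double-brooms of diameter $d$). *)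

theory Defs
  imports Complex_Main "HOL-Library.Disjoint_Sets"
begin

definition simple_graph :: "'a set \<Rightarrow> 'a set set \<Rightarrow> bool" where
  "simple_graph V E \<longleftrightarrow> finite V \<and> (\<forall>e\<in>E. \<exists>u v. e = {u, v} \<and> u \<noteq> v \<and> u \<in> V \<and> v \<in> V)"

definition walk :: "'a set \<Rightarrow> 'a set set \<Rightarrow> 'a list \<Rightarrow> bool" where
  "walk V E xs \<longleftrightarrow> xs \<noteq> [] \<and> set xs \<subseteq> V \<and> (\<forall>j. Suc j < length xs \<longrightarrow> {xs ! j, xs ! Suc j} \<in> E)"

definition connected_graph :: "'a set \<Rightarrow> 'a set set \<Rightarrow> bool" where
  "connected_graph V E \<longleftrightarrow> simple_graph V E \<and> V \<noteq> {} \<and>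
     (\<forall>u\<in>V. \<forall>v\<in>V. \<exists>xs. walk V E xs \<and> hd xs = u \<and> last xs = v)"

definition gdist :: "'a set \<Rightarrow> 'a set set \<Rightarrow> 'a \<Rightarrow> 'a \<Rightarrow> nat" where
  "gdist V E u v = (LEAST m. \<exists>xs. walk V E xs \<and> hd xs = u \<and> last xs = v \<and> length xs = Suc m)"

definition ecc :: "'a set \<Rightarrow> 'a set set \<Rightarrow> 'a \<Rightarrow> nat" where
  "ecc V E u = Max (gdist V E u ` V)"

definition diameter :: "'a set \<Rightarrow> 'a set set \<Rightarrow> nat" where
  "diameter V E = Max (ecc V E ` V)"

definition sigma0 :: "'a set \<Rightarrow> 'a set set \<Rightarrow> real" where
  "sigma0 V E = (\<Sum>u\<in>V. real (ecc V E u)) / real (card V)"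

definition sigma1 :: "'a set \<Rightarrow> 'a set set \<Rightarrow> real" where
  "sigma1 V E = (\<Sum>u\<in>V. real (ecc V E u) ^ 2)"

definition sigma :: "nat \<Rightarrow> 'a set \<Rightarrow> 'a set set \<Rightarrow> real" where
  "sigma i V E = (if i = 0 then sigma0 V E else sigma1 V E)"

definition matching :: "'a set set \<Rightarrow> 'a set set \<Rightarrow> bool" where
  "matching E M \<longleftrightarrow> M \<subseteq> E \<and> disjoint M"

definition matching_number :: "'a set set \<Rightarrow> nat" where
  "matching_number E = Max (card ` {M. matching E M})"

definition path_V :: "nat \<Rightarrow> nat set" where
  "path_V n = {0..<n}"

definition path_E :: "nat \<Rightarrow> nat set set" where
  "path_E n = {{j, Suc j} | j. Suc j < n}"

definition graph_iso :: "'a set \<Rightarrow> 'a set set \<Rightarrow> 'b set \<Rightarrow> 'b set set \<Rightarrow> bool" where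
  "graph_iso V E V' E' \<longleftrightarrow> (\<exists>f. bij_betw f V V' \<and>
     (\<forall>u\<in>V. \<forall>v\<in>V. {u, v} \<in> E \<longleftrightarrow> {f u, f v} \<in> E'))"

definition double_broom :: "'a set \<Rightarrow> 'a set set \<Rightarrow> bool" where
  "double_broom V E \<longleftrightarrow> finite V \<and> (\<exists>ps A B. ps \<noteq> [] \<and> distinct ps \<and>
     A \<inter> set ps = {} \<and> B \<inter> set ps = {} \<and> A \<inter> B = {} \<and>
     V = set ps \<union> A \<union> B \<and>
     E = {{ps ! j, ps ! Suc j} | j. Suc j < length ps}
         \<union> {{hd ps, a} | a. a \<in> A} \<union> {{last ps, b} | b. b \<in> B})"

definition f0 :: "nat \<Rightarrow> nat \<Rightarrow> real" where
  "f0 n d = real d - real (d^2 div 4) / real n"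

definition eps_d :: "nat \<Rightarrow> real" where
  "eps_d d = (if even d then real d / 4 else 0)"

definition f1 :: "nat \<Rightarrow> nat \<Rightarrow> real" where
  "f1 n d = real n * real d ^ 2 - 5 * real d / 12 * (real d ^ 2 - 1) - eps_d d"

definition f :: "nat \<Rightarrow> nat \<Rightarrow> nat \<Rightarrow> real" where
  "f i n d = (if i = 0 then f0 n d else f1 n d)"

end

theory Submission
  imports Defs
begin

text \<open>Let \<open>P\<close> be a longest path of a connected graph, with \<open>L\<close> edges. If \<open>P ! i\<close> is the vertex
  of \<open>P\<close> nearest to \<open>v\<close>, then \<open>v\<close> is within distance \<open>i\<close> and \<open>L - i\<close> of it, for otherwise a
  shortest path from \<open>v\<close> spliced into \<open>P\<close> would give a longer path. Hence \<open>P ! j\<close> has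
  eccentricity at most \<open>max j (L - j)\<close>, and every vertex at most \<open>L\<close>, which is exactly what a
  double broom of diameter \<open>L\<close> attains. So \<open>\<Sum>u. h (ecc u)\<close> is bounded, for monotone \<open>h\<close>, by
  its value on a double broom of diameter \<open>L\<close> and as many vertices, which increases with \<open>L\<close>.
  Finally \<open>L \<le> 2k\<close> because every other edge of \<open>P\<close> belongs to a matching, and \<open>L \<le> n - 1\<close>;
  in the latter case equality forces \<open>P\<close> to be Hamiltonian and chordless, as a chord would
  shortcut the path from its first vertex.\<close>

section \<open>Walks and distances\<close>

lemma walk_singleton [simp]: "walk V E [u] \<longleftrightarrow> u \<in> V"
  by (auto simp: walk_def)

lemma walk_not_Nil: "walk V E xs \<Longrightarrow> xs \<noteq> []"
  by (simp add: walk_def)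

lemma walk_edge: "walk V E xs \<Longrightarrow> Suc j < length xs \<Longrightarrow> {xs ! j, xs ! Suc j} \<in> E"
  by (simp add: walk_def)

lemma walk_nth_mem: "walk V E xs \<Longrightarrow> j < length xs \<Longrightarrow> xs ! j \<in> V"
  by (auto simp: walk_def)

lemma walk_append:
  assumes "walk V E xs" "walk V E ys" "{last xs, hd ys} \<in> E"
  shows "walk V E (xs @ ys)"
  unfolding walk_def
proof (intro conjI allI impI)
  show "xs @ ys \<noteq> []" "set (xs @ ys) \<subseteq> V" using assms by (auto simp: walk_def)
  fix j assume j: "Suc j < length (xs @ ys)"
  have "xs \<noteq> []" "ys \<noteq> []" using assms by (auto simp: walk_def)
  consider "Suc j < length xs" | "Suc j = length xs" | "length xs \<le> j" by linarith
  then show "{(xs @ ys) ! j, (xs @ ys) ! Suc j} \<in> E"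
  proof cases
    case 1 then show ?thesis using assms(1) by (simp add: nth_append walk_def)
  next
    case 2
    then have "j = length xs - 1" by simp
    then show ?thesis
      using assms(3) 2 \<open>xs \<noteq> []\<close> \<open>ys \<noteq> []\<close> by (simp add: nth_append last_conv_nth hd_conv_nth)
  next
    case 3 then show ?thesis
      using assms(2) j by (simp add: nth_append Suc_diff_le walk_def)
  qed
qed

lemma walk_rev: "walk V E xs \<Longrightarrow> walk V E (rev xs)"
  unfolding walk_def
proof (intro conjI allI impI)
  fix j assume xs: "xs \<noteq> [] \<and> set xs \<subseteq> V \<and> (\<forall>j. Suc j < length xs \<longrightarrow> {xs ! j, xs ! Suc j} \<in> E)"
    and j: "Suc j < length (rev xs)"
  let ?m = "length xs - Suc (Suc j)"
  have "{xs ! ?m, xs ! Suc ?m} \<in> E" using xs j by auto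
  then show "{rev xs ! j, rev xs ! Suc j} \<in> E" using j by (simp add: rev_nth Suc_diff_Suc insert_commute)
qed auto

lemma walk_take: "walk V E xs \<Longrightarrow> 0 < i \<Longrightarrow> walk V E (take i xs)"
  by (auto simp: walk_def dest: in_set_takeD)

lemma walk_drop: "walk V E xs \<Longrightarrow> i < length xs \<Longrightarrow> walk V E (drop i xs)"
  by (auto simp: walk_def dest: in_set_dropD)

text \<open>Upper bounds on distances are handled through this predicate: unlike \<open>gdist\<close>, which is a
  junk value between unreachable vertices, it composes without connectivity assumptions.\<close>

definition reachable_within :: "'a set \<Rightarrow> 'a set set \<Rightarrow> 'a \<Rightarrow> 'a \<Rightarrow> nat \<Rightarrow> bool" where
  "reachable_within V E u v m \<longleftrightarrow> (\<exists>xs. walk V E xs \<and> hd xs = u \<and> last xs = v \<and> length xs \<le> Suc m)"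

lemma reachable_withinI:
  "walk V E xs \<Longrightarrow> hd xs = u \<Longrightarrow> last xs = v \<Longrightarrow> length xs \<le> Suc m \<Longrightarrow> reachable_within V E u v m"
  unfolding reachable_within_def by blast

lemma reachable_within_refl: "u \<in> V \<Longrightarrow> reachable_within V E u u 0"
  by (rule reachable_withinI[of _ _ "[u]"]) auto

lemma reachable_within_edge: "{u, v} \<in> E \<Longrightarrow> u \<in> V \<Longrightarrow> v \<in> V \<Longrightarrow> reachable_within V E u v 1"
  by (rule reachable_withinI[of _ _ "[u, v]"]) (auto simp: walk_def less_Suc_eq)

lemma reachable_within_sym: "reachable_within V E u v m \<Longrightarrow> reachable_within V E v u m"
  unfolding reachable_within_def
  by (metis hd_rev last_rev length_rev walk_not_Nil walk_rev)

lemma reachable_within_trans: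
  assumes "reachable_within V E u v a" "reachable_within V E v w b"
  shows "reachable_within V E u w (a + b)"
proof -
  obtain xs where xs: "walk V E xs" "hd xs = u" "last xs = v" "length xs \<le> Suc a"
    using assms(1) by (auto simp: reachable_within_def)
  obtain ys where ys: "walk V E ys" "hd ys = v" "last ys = w" "length ys \<le> Suc b"
    using assms(2) by (auto simp: reachable_within_def)
  show ?thesis
  proof (cases "length ys = 1")
    case True
    then have "ys = [v]" "w = v" using ys by (auto simp: length_Suc_conv)
    then show ?thesis using xs by (intro reachable_withinI[of _ _ xs]) auto
  next
    case False
    then have l: "1 < length ys" using walk_not_Nil[OF ys(1)] by (cases ys) auto
    have "{last xs, hd (drop 1 ys)} \<in> E"
      using walk_edge[OF ys(1), of 0] l xs(3) ys(2) walk_not_Nil[OF ys(1)]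
      by (simp add: hd_drop_conv_nth hd_conv_nth)
    then have "walk V E (xs @ drop 1 ys)" using walk_append[OF xs(1) walk_drop[OF ys(1) l]] by blast
    then show ?thesis
      using xs ys l walk_not_Nil[OF xs(1)]
      by (intro reachable_withinI[of _ _ "xs @ drop 1 ys"]) (auto simp: last_drop)
  qed
qed

lemma reachable_within_walk:
  assumes "walk V E xs" "a < length xs" "b < length xs"
  shows "reachable_within V E (xs ! a) (xs ! b) (a - b + (b - a))"
proof -
  have seg: "reachable_within V E (xs ! i) (xs ! j) (j - i)" if "i \<le> j" "j < length xs" for i j
  proof (rule reachable_withinI)
    show "walk V E (drop i (take (Suc j) xs))" using that walk_drop[OF walk_take[OF assms(1)]] by simp
  qed (use that in \<open>auto simp: hd_drop_conv_nth last_conv_nth\<close>)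
  show ?thesis
  proof (cases "a \<le> b")
    case True then show ?thesis using seg[OF True assms(3)] by simp
  next
    case False then show ?thesis using reachable_within_sym[OF seg[of b a]] assms(2) by simp
  qed
qed

lemma connected_reachable_within:
  "connected_graph V E \<Longrightarrow> u \<in> V \<Longrightarrow> v \<in> V \<Longrightarrow> \<exists>m. reachable_within V E u v m"
proof -
  assume "connected_graph V E" "u \<in> V" "v \<in> V"
  then obtain xs where "walk V E xs" "hd xs = u" "last xs = v" unfolding connected_graph_def by blast
  then show ?thesis using reachable_withinI[of V E xs u v "length xs"] by auto
qed

lemma gdist_le: "reachable_within V E u v m \<Longrightarrow> gdist V E u v \<le> m"
proof -
  assume "reachable_within V E u v m"
  then obtain xs where xs: "walk V E xs" "hd xs = u" "last xs = v" "length xs \<le> Suc m"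
    by (auto simp: reachable_within_def)
  then have "length xs = Suc (length xs - 1)" using walk_not_Nil by fastforce
  then have "gdist V E u v \<le> length xs - 1"
    unfolding gdist_def using xs by (intro Least_le) blast
  then show ?thesis using xs by simp
qed

lemma gdist_shortest_walk:
  assumes "reachable_within V E u v m"
  obtains xs where "walk V E xs" "hd xs = u" "last xs = v" "length xs = Suc (gdist V E u v)"
proof -
  obtain xs where "walk V E xs" "hd xs = u" "last xs = v"
    using assms by (auto simp: reachable_within_def)
  then have "\<exists>m xs. walk V E xs \<and> hd xs = u \<and> last xs = v \<and> length xs = Suc m"
    by (metis Suc_pred' length_greater_0_conv walk_not_Nil)
  from LeastI_ex[OF this] show ?thesis using that unfolding gdist_def by blast
qed

lemma reachable_within_gdist: "reachable_within V E u v m \<Longrightarrow> reachable_within V E u v (gdist V E u v)"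
  by (metis gdist_shortest_walk order_refl reachable_withinI)

text \<open>Deleting the closed subwalk between two visits of a vertex would give a shorter walk.\<close>

lemma gdist_shortest_path:
  assumes "reachable_within V E u v m"
  obtains xs where "walk V E xs" "hd xs = u" "last xs = v" "length xs = Suc (gdist V E u v)" "distinct xs"
proof -
  obtain xs where xs: "walk V E xs" "hd xs = u" "last xs = v" "length xs = Suc (gdist V E u v)"
    using gdist_shortest_walk[OF assms] by blast
  have "distinct xs"
  proof (rule ccontr)
    assume "\<not> distinct xs"
    then obtain i0 j0 where "i0 < length xs" "j0 < length xs" "i0 \<noteq> j0" "xs ! i0 = xs ! j0"
      by (auto simp: distinct_conv_nth)
    then obtain i j where ij: "i < j" "j < length xs" "xs ! i = xs ! j"
      by (cases "i0 < j0") (auto intro: that[of i0 j0] that[of j0 i0])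
    let ?ys = "take i xs @ drop j xs"
    have "walk V E ?ys"
    proof (cases "i = 0")
      case True then show ?thesis using walk_drop[OF xs(1) ij(2)] by simp
    next
      case False
      have "last (take i xs) = xs ! (i - 1)" using False ij by (subst last_conv_nth) auto
      then have "{last (take i xs), hd (drop j xs)} = {xs ! (i - 1), xs ! Suc (i - 1)}"
        using False ij by (simp add: hd_drop_conv_nth)
      then show ?thesis
        using walk_append[OF walk_take[OF xs(1)] walk_drop[OF xs(1) ij(2)]] walk_edge[OF xs(1), of "i - 1"] False ij
        by simp
    qed
    moreover have "hd ?ys = u"
    proof (cases "i = 0")
      case True then show ?thesis using ij xs walk_not_Nil[OF xs(1)] by (simp add: hd_drop_conv_nth hd_conv_nth)
    qed (use ij xs walk_not_Nil[OF xs(1)] in simp)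
    moreover have "last ?ys = v" using ij xs by simp
    moreover have "length ?ys \<le> Suc (gdist V E u v - (j - i))" using ij xs by simp
    ultimately have "reachable_within V E u v (gdist V E u v - (j - i))" by (rule reachable_withinI)
    then have "gdist V E u v \<le> gdist V E u v - (j - i)" by (rule gdist_le)
    then show False using ij xs by simp
  qed
  then show ?thesis by (rule that[OF xs])
qed

lemma gdist_le_ecc: "finite V \<Longrightarrow> v \<in> V \<Longrightarrow> gdist V E u v \<le> ecc V E u"
  unfolding ecc_def by (rule Max_ge) auto

lemma ecc_le: "finite V \<Longrightarrow> V \<noteq> {} \<Longrightarrow> (\<And>v. v \<in> V \<Longrightarrow> gdist V E u v \<le> m) \<Longrightarrow> ecc V E u \<le> m"
  unfolding ecc_def by (subst Max_le_iff) auto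

lemma connected_graph_finite: "connected_graph V E \<Longrightarrow> finite V"
  and connected_graph_nonempty: "connected_graph V E \<Longrightarrow> V \<noteq> {}"
  by (auto simp: connected_graph_def simple_graph_def)

section \<open>Longest paths\<close>

definition longest_path :: "'a set \<Rightarrow> 'a set set \<Rightarrow> 'a list \<Rightarrow> bool" where
  "longest_path V E P \<longleftrightarrow>
     walk V E P \<and> distinct P \<and> (\<forall>Q. walk V E Q \<and> distinct Q \<longrightarrow> length Q \<le> length P)"

lemma distinct_walk_length_le_card: "finite V \<Longrightarrow> walk V E Q \<Longrightarrow> distinct Q \<Longrightarrow> length Q \<le> card V"
  by (metis card_mono distinct_card walk_def)

lemma longest_path_exists:
  assumes "finite V" "V \<noteq> {}"
  obtains P where "longest_path V E P"
proof -
  let ?S = "{Q. walk V E Q \<and> distinct Q}"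
  have fin: "finite (length ` ?S)"
    by (rule finite_subset[of _ "{..card V}"]) (use distinct_walk_length_le_card[OF assms(1)] in auto)
  obtain u where "u \<in> V" using assms by blast
  then have "[u] \<in> ?S" by simp
  then have "length ` ?S \<noteq> {}" by blast
  then obtain P where "P \<in> ?S" "length P = Max (length ` ?S)" using Max_in[OF fin] by auto
  moreover have "\<forall>Q\<in>?S. length Q \<le> Max (length ` ?S)" using Max_ge[OF fin] by auto
  ultimately have "longest_path V E P" unfolding longest_path_def by simp
  then show ?thesis by (rule that)
qed

lemma longest_path_rev: "longest_path V E P \<Longrightarrow> longest_path V E (rev P)"
  unfolding longest_path_def using walk_rev by auto

text \<open>A shortest path from \<open>v\<close> to its nearest vertex \<open>P ! i\<close> meets \<open>P\<close> only in its end, so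
  followed by the part of \<open>P\<close> after \<open>i\<close> it is again a path, no longer than \<open>P\<close>.\<close>

lemma gdist_nearest_le_index:
  assumes L: "longest_path V E P" and conn: "connected_graph V E" and v: "v \<in> V"
    and i: "i < length P" and nearest: "\<And>x. x \<in> set P \<Longrightarrow> gdist V E v (P ! i) \<le> gdist V E v x"
  shows "gdist V E v (P ! i) \<le> i"
proof -
  have wP: "walk V E P" and dP: "distinct P"
    and longest: "\<And>Q. walk V E Q \<Longrightarrow> distinct Q \<Longrightarrow> length Q \<le> length P"
    using L unfolding longest_path_def by auto
  define d where "d = gdist V E v (P ! i)"
  obtain m where "reachable_within V E v (P ! i) m"
    using connected_reachable_within[OF conn v walk_nth_mem[OF wP i]] by blast
  then obtain Q where Q: "walk V E Q" "hd Q = v" "last Q = P ! i" "length Q = Suc d" "distinct Q"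
    unfolding d_def by (rule gdist_shortest_path)
  have avoid: "Q ! p \<notin> set P" if "p < d" for p
  proof
    assume "Q ! p \<in> set P"
    have "hd (take (Suc p) Q) = v" using Q(2) walk_not_Nil[OF Q(1)] by (cases Q) auto
    moreover have "last (take (Suc p) Q) = Q ! p" using Q(4) that by (simp add: take_Suc_conv_app_nth)
    ultimately have "reachable_within V E v (Q ! p) p"
      using walk_take[OF Q(1), of "Suc p"] by (intro reachable_withinI) auto
    then show False using gdist_le nearest[OF \<open>Q ! p \<in> set P\<close>] that unfolding d_def by fastforce
  qed
  show ?thesis
  proof (cases "Suc i = length P")
    case True then show ?thesis using longest[OF Q(1) Q(5)] Q(4) unfolding d_def by simp
  next
    case False
    then have si: "Suc i < length P" using i by simp
    let ?R = "Q @ drop (Suc i) P"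
    have "walk V E ?R"
      using walk_append[OF Q(1) walk_drop[OF wP si]] Q(3) walk_edge[OF wP si] si
      by (simp add: hd_drop_conv_nth)
    moreover have "set Q \<inter> set (drop (Suc i) P) = {}"
    proof -
      have "x \<notin> set (drop (Suc i) P)" if xQ: "x \<in> set Q" for x
      proof -
        obtain p where p: "p < Suc d" "Q ! p = x" using xQ Q(4) by (auto simp: in_set_conv_nth)
        show ?thesis
        proof (cases "p < d")
          case True then show ?thesis using avoid p(2) by (meson in_set_dropD)
        next
          case False
          then have "p = d" using p(1) by simp
          then have "x = P ! i" using p Q(3,4) walk_not_Nil[OF Q(1)] by (simp add: last_conv_nth)
          then show ?thesis
            using set_take_disj_set_drop_if_distinct[OF dP, of "Suc i" "Suc i"] i
            by (auto simp: take_Suc_conv_app_nth)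
        qed
      qed
      then show ?thesis by blast
    qed
    then have "distinct ?R" using Q(5) dP by simp
    ultimately show ?thesis using longest[of ?R] Q(4) si unfolding d_def by simp
  qed
qed

lemma ecc_longest_path_nth:
  assumes L: "longest_path V E P" and conn: "connected_graph V E" and j: "j < length P"
  shows "ecc V E (P ! j) \<le> max j (length P - 1 - j)"
proof (rule ecc_le[OF connected_graph_finite[OF conn] connected_graph_nonempty[OF conn]])
  fix v assume v: "v \<in> V"
  have wP: "walk V E P" using L unfolding longest_path_def by auto
  define m where "m = Min (gdist V E v ` set P)"
  have "m \<in> gdist V E v ` set P" unfolding m_def using j by (intro Min_in) auto
  then obtain x where x: "x \<in> set P" "gdist V E v x = m" by auto
  have nearest: "gdist V E v x \<le> gdist V E v y" if "y \<in> set P" for y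
    using that x(2) unfolding m_def by simp
  obtain i where i: "i < length P" "P ! i = x" using x by (auto simp: in_set_conv_nth)
  have d1: "gdist V E v (P ! i) \<le> i"
    by (rule gdist_nearest_le_index[OF L conn v i(1)]) (use i nearest in simp)
  have "gdist V E v (rev P ! (length P - 1 - i)) \<le> length P - 1 - i"
    by (rule gdist_nearest_le_index[OF longest_path_rev[OF L] conn v])
       (use i nearest in \<open>auto simp: rev_nth\<close>)
  then have d2: "gdist V E v (P ! i) \<le> length P - 1 - i" using i by (simp add: rev_nth)
  obtain r where "reachable_within V E v (P ! i) r"
    using connected_reachable_within[OF conn v walk_nth_mem[OF wP i(1)]] by blast
  then have "reachable_within V E (P ! i) v (gdist V E v (P ! i))"
    by (rule reachable_within_sym[OF reachable_within_gdist])
  with reachable_within_walk[OF wP j i(1)]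
  have "gdist V E (P ! j) v \<le> (j - i + (i - j)) + gdist V E v (P ! i)"
    by (rule gdist_le[OF reachable_within_trans])
  then show "gdist V E (P ! j) v \<le> max j (length P - 1 - j)" using d1 d2 i j by auto
qed

lemma ecc_le_longest_path:
  assumes L: "longest_path V E P" and conn: "connected_graph V E" and u: "u \<in> V"
  shows "ecc V E u \<le> length P - 1"
proof (rule ecc_le[OF connected_graph_finite[OF conn] connected_graph_nonempty[OF conn]])
  fix v assume "v \<in> V"
  then obtain m where "reachable_within V E u v m" using connected_reachable_within[OF conn u] by blast
  then obtain Q where "walk V E Q" "length Q = Suc (gdist V E u v)" "distinct Q"
    by (rule gdist_shortest_path)
  then show "gdist V E u v \<le> length P - 1" using L unfolding longest_path_def by fastforce
qed

text \<open>Every other edge of a path forms a matching.\<close>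

lemma path_length_le_matching_number:
  assumes wP: "walk V E P" and dP: "distinct P" and finE: "finite E"
  shows "length P \<le> Suc (2 * matching_number E)"
proof -
  define m where "m = length P div 2"
  define M where "M = (\<lambda>s. {P ! (2 * s), P ! (2 * s + 1)}) ` {..<m}"
  have len: "2 * s + 1 < length P" if "s < m" for s using that unfolding m_def by linarith
  have "M \<subseteq> E" unfolding M_def using walk_edge[OF wP] len by auto
  moreover have "disjoint M"
    unfolding M_def by (rule pairwiseI) (auto simp: disjnt_def nth_eq_iff_index_eq[OF dP] dest!: len; presburger)
  ultimately have "matching E M" unfolding matching_def by blast
  moreover have "card M = m"
  proof -
    have "inj_on (\<lambda>s. {P ! (2 * s), P ! (2 * s + 1)}) {..<m}"
      by (rule inj_onI) (auto simp: doubleton_eq_iff nth_eq_iff_index_eq[OF dP] dest!: len; presburger)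
    then show ?thesis unfolding M_def by (simp add: card_image)
  qed
  moreover have "finite (card ` {M. matching E M})"
    using finE by (auto intro: finite_subset[of _ "Pow E"] simp: matching_def)
  ultimately have "m \<le> matching_number E" unfolding matching_number_def by (metis Max_ge image_eqI mem_Collect_eq)
  then show ?thesis unfolding m_def by linarith
qed

lemma simple_graph_finite_edges: "simple_graph V E \<Longrightarrow> finite E"
proof -
  assume G: "simple_graph V E"
  then have "E \<subseteq> Pow V" unfolding simple_graph_def by auto
  with G show "finite E" unfolding simple_graph_def by (meson finite_Pow_iff finite_subset)
qed

section \<open>The eccentricity profile of a double broom\<close>

text \<open>\<open>ecc_profile h n L\<close> is the value of \<open>\<Sum>u. h (ecc u)\<close> on an \<open>n\<close>-vertex double broom of
  diameter \<open>L\<close>: the \<open>j\<close>-th vertex of a diametral path has eccentricity \<open>max j (L - j)\<close>, every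
  other vertex eccentricity \<open>L\<close>.\<close>

definition ecc_profile :: "(nat \<Rightarrow> nat) \<Rightarrow> nat \<Rightarrow> nat \<Rightarrow> nat" where
  "ecc_profile h n L = (\<Sum>j\<le>L. h (max j (L - j))) + (n - Suc L) * h L"

lemma sum_split_image:
  assumes "finite V" "inj_on c {..L}" "c ` {..L} \<subseteq> V"
  shows "(\<Sum>u\<in>V. g u) = (\<Sum>j\<le>L. g (c j)) + (\<Sum>u\<in>V - c ` {..L}. g u)"
    and "card (V - c ` {..L}) = card V - Suc L"
proof -
  have "(\<Sum>u\<in>V. g u) = (\<Sum>u\<in>V - c ` {..L}. g u) + (\<Sum>u\<in>c ` {..L}. g u)"
    by (rule sum.subset_diff[OF assms(3,1)])
  then show "(\<Sum>u\<in>V. g u) = (\<Sum>j\<le>L. g (c j)) + (\<Sum>u\<in>V - c ` {..L}. g u)"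
    by (simp add: sum.reindex[OF assms(2)] add.commute)
  show "card (V - c ` {..L}) = card V - Suc L"
    using card_Diff_subset[OF finite_subset[OF assms(3,1)] assms(3)] card_image[OF assms(2)] by simp
qed

lemma sum_le_ecc_profile:
  assumes "finite V" "inj_on c {..L}" "c ` {..L} \<subseteq> V" "mono h"
    and "\<And>j. j \<le> L \<Longrightarrow> e (c j) \<le> max j (L - j)" and "\<And>u. u \<in> V \<Longrightarrow> e u \<le> L"
  shows "(\<Sum>u\<in>V. h (e u)) \<le> ecc_profile h (card V) L"
proof -
  have "(\<Sum>j\<le>L. h (e (c j))) \<le> (\<Sum>j\<le>L. h (max j (L - j)))"
    by (rule sum_mono) (use assms(4,5) in \<open>auto simp: monoD\<close>)
  moreover have "(\<Sum>u\<in>V - c ` {..L}. h (e u)) \<le> card (V - c ` {..L}) * h L"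
    using sum_bounded_above[of "V - c ` {..L}" "\<lambda>u. h (e u)" "h L"] assms(4,6) by (auto simp: monoD)
  ultimately show ?thesis unfolding ecc_profile_def sum_split_image[OF assms(1-3)] by simp
qed

lemma sum_less_ecc_profile:
  assumes "finite V" "inj_on c {..L}" "c ` {..L} \<subseteq> V" "strict_mono h"
    and "\<And>j. j \<le> L \<Longrightarrow> e (c j) \<le> max j (L - j)" and "\<And>u. u \<in> V \<Longrightarrow> e u \<le> L"
    and "j0 \<le> L" "e (c j0) < max j0 (L - j0)"
  shows "(\<Sum>u\<in>V. h (e u)) < ecc_profile h (card V) L"
proof -
  have mono: "mono h" using assms(4) by (rule strict_mono_mono)
  have "(\<Sum>j\<le>L. h (e (c j))) < (\<Sum>j\<le>L. h (max j (L - j)))"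
    by (rule sum_strict_mono_ex1) (use mono assms(4,5,7,8) in \<open>auto simp: monoD strict_mono_less\<close>)
  moreover have "(\<Sum>u\<in>V - c ` {..L}. h (e u)) \<le> card (V - c ` {..L}) * h L"
    using sum_bounded_above[of "V - c ` {..L}" "\<lambda>u. h (e u)" "h L"] mono assms(6) by (auto simp: monoD)
  ultimately show ?thesis unfolding ecc_profile_def sum_split_image[OF assms(1-3)] by simp
qed

lemma sum_eq_ecc_profile:
  assumes "finite V" "inj_on c {..L}" "c ` {..L} \<subseteq> V"
    and "\<And>j. j \<le> L \<Longrightarrow> e (c j) = max j (L - j)" and "\<And>u. u \<in> V - c ` {..L} \<Longrightarrow> e u = L"
  shows "(\<Sum>u\<in>V. h (e u)) = ecc_profile h (card V) L"
  unfolding ecc_profile_def sum_split_image[OF assms(1-3)] using assms(4,5) sum_split_image(2)[OF assms(1-3)] by simp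

text \<open>Lengthening the path by one edge raises the eccentricity of its first vertex from \<open>L\<close> to
  \<open>Suc L\<close> and no eccentricity decreases.\<close>

lemma ecc_profile_Suc:
  assumes "mono h" "Suc (Suc L) \<le> n"
  shows "ecc_profile h n L + (h (Suc L) - h L) \<le> ecc_profile h n (Suc L)"
proof -
  have step: "h L \<le> h (Suc L)" using assms(1) by (simp add: monoD)
  have "(\<Sum>j\<le>L. h (max j (L - j))) + (h (Suc L) - h L) \<le> (\<Sum>j\<le>L. h (max j (Suc L - j)))"
  proof -
    have "(\<Sum>j\<in>{1..L}. h (max j (L - j))) \<le> (\<Sum>j\<in>{1..L}. h (max j (Suc L - j)))"
      by (rule sum_mono) (use assms(1) in \<open>auto simp: monoD\<close>)
    moreover have "{..L} = insert 0 {1..L}" by auto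
    ultimately show ?thesis using step by simp
  qed
  moreover have "(n - Suc (Suc L)) * h L \<le> (n - Suc (Suc L)) * h (Suc L)" using step by simp
  moreover have "n - Suc L = Suc (n - Suc (Suc L))" using assms(2) by simp
  then have "ecc_profile h n L = (\<Sum>j\<le>L. h (max j (L - j))) + h L + (n - Suc (Suc L)) * h L"
    unfolding ecc_profile_def by simp
  moreover have "ecc_profile h n (Suc L)
      = (\<Sum>j\<le>L. h (max j (Suc L - j))) + h (Suc L) + (n - Suc (Suc L)) * h (Suc L)"
    unfolding ecc_profile_def by simp
  ultimately show ?thesis using step by linarith
qed

lemma ecc_profile_mono:
  assumes "mono h" "L \<le> L'" "L' < n"
  shows "ecc_profile h n L \<le> ecc_profile h n L'"
  using assms(2,3)
proof (induction L' rule: dec_induct)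
  case (step L')
  then have "ecc_profile h n L' \<le> ecc_profile h n (Suc L')"
    using ecc_profile_Suc[OF assms(1), of L' n] by simp
  with step show ?case by simp
qed simp

lemma ecc_profile_strict_mono:
  assumes "strict_mono h" "L < L'" "L' < n"
  shows "ecc_profile h n L < ecc_profile h n L'"
proof -
  have "ecc_profile h n L < ecc_profile h n (Suc L)"
    using ecc_profile_Suc[OF strict_mono_mono[OF assms(1)], of L n] strict_mono_less[OF assms(1), of L "Suc L"] assms(2,3)
    by simp
  also have "\<dots> \<le> ecc_profile h n L'"
    using ecc_profile_mono[OF strict_mono_mono[OF assms(1)]] assms(2,3) by simp
  finally show ?thesis .
qed

lemma sum_max_Suc_Suc:
  fixes h :: "nat \<Rightarrow> nat"
  shows "(\<Sum>j\<le>Suc (Suc D). h (max j (Suc (Suc D) - j)))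
    = 2 * h (Suc (Suc D)) + (\<Sum>j\<le>D. h (Suc (max j (D - j))))"
proof -
  have ends: "(\<Sum>j\<le>Suc (Suc D). g j) = g 0 + (\<Sum>j\<le>D. g (Suc j)) + g (Suc (Suc D))" for g :: "nat \<Rightarrow> nat"
    by (subst sum.atMost_Suc_shift, subst sum.atMost_Suc) simp
  have "(\<Sum>j\<le>D. h (max (Suc j) (Suc (Suc D) - Suc j))) = (\<Sum>j\<le>D. h (Suc (max j (D - j))))"
    by (rule sum.cong) (auto simp: Suc_diff_le)
  then show ?thesis using ends[of "\<lambda>j. h (max j (Suc (Suc D) - j))"] by simp
qed

lemma sum_max_even: "(\<Sum>j\<le>2 * (m::nat). max j (2 * m - j)) = 3 * m\<^sup>2 + 2 * m"
proof (induction m)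
  case (Suc m)
  have "(\<Sum>j\<le>2 * Suc m. max j (2 * Suc m - j)) = 2 * Suc (Suc (2 * m)) + (\<Sum>j\<le>2 * m. Suc (max j (2 * m - j)))"
    using sum_max_Suc_Suc[of "\<lambda>x. x" "2 * m"] by simp
  also have "\<dots> = 2 * Suc (Suc (2 * m)) + (\<Sum>j\<le>2 * m. max j (2 * m - j)) + Suc (2 * m)"
    by (simp add: sum_Suc)
  finally show ?case using Suc by (simp add: power2_eq_square algebra_simps)
qed simp

lemma sum_max_sq_even: "3 * (\<Sum>j\<le>2 * (m::nat). (max j (2 * m - j))\<^sup>2) = 14 * m ^ 3 + 12 * m\<^sup>2 + m"
proof (induction m)
  case (Suc m)
  have "(\<Sum>j\<le>2 * Suc m. (max j (2 * Suc m - j))\<^sup>2)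
      = 2 * (Suc (Suc (2 * m)))\<^sup>2 + (\<Sum>j\<le>2 * m. (Suc (max j (2 * m - j)))\<^sup>2)"
    using sum_max_Suc_Suc[of "\<lambda>x. x\<^sup>2" "2 * m"] by simp
  also have "\<dots> = 2 * (Suc (Suc (2 * m)))\<^sup>2 + (\<Sum>j\<le>2 * m. (max j (2 * m - j))\<^sup>2)
      + 2 * (\<Sum>j\<le>2 * m. max j (2 * m - j)) + Suc (2 * m)"
  proof -
    have "(Suc x)\<^sup>2 = Suc (x\<^sup>2 + 2 * x)" for x :: nat by (simp add: power2_eq_square)
    then show ?thesis by (simp add: sum_Suc sum.distrib sum_distrib_left)
  qed
  finally show ?case using Suc sum_max_even[of m] by (simp add: power2_eq_square power3_eq_cube algebra_simps)
qed simp

lemma f_eq_ecc_profile: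
  assumes "i \<in> {0, 1}" "2 * m < n"
  shows "f i n (2 * m) = real (ecc_profile (\<lambda>x. x ^ Suc i) n (2 * m)) / (if i = 0 then real n else 1)"
proof (cases "i = 0")
  case True
  have "ecc_profile (\<lambda>x. x) n (2 * m) = (3 * m\<^sup>2 + 2 * m) + (n - Suc (2 * m)) * (2 * m)"
    unfolding ecc_profile_def using sum_max_even[of m] by simp
  then have "real (ecc_profile (\<lambda>x. x) n (2 * m))
      = (3 * (real m)\<^sup>2 + 2 * real m) + (real n - (2 * real m + 1)) * (2 * real m)"
    using assms(2) by (simp add: of_nat_diff)
  then have "real (ecc_profile (\<lambda>x. x) n (2 * m)) = 2 * real m * real n - (real m)\<^sup>2"
    by (simp add: algebra_simps power2_eq_square)
  moreover have "(2 * m)\<^sup>2 div 4 = m\<^sup>2" by (simp add: power_mult_distrib)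
  ultimately show ?thesis using True assms(2) by (simp add: f_def f0_def field_simps)
next
  case False
  then have "i = 1" using assms(1) by simp
  have "3 * real (\<Sum>j\<le>2 * m. (max j (2 * m - j))\<^sup>2) = 14 * real m ^ 3 + 12 * (real m)\<^sup>2 + real m"
    using arg_cong[OF sum_max_sq_even[of m], of real] by simp
  moreover have "real (ecc_profile (\<lambda>x. x\<^sup>2) n (2 * m))
      = real (\<Sum>j\<le>2 * m. (max j (2 * m - j))\<^sup>2) + (real n - (2 * real m + 1)) * (2 * real m)\<^sup>2"
    using assms(2) by (simp add: ecc_profile_def of_nat_diff)
  moreover have "f1 n (2 * m) = real n * (2 * real m)\<^sup>2 - 5 * (2 * real m) / 12 * ((2 * real m)\<^sup>2 - 1) - real m / 2"
    unfolding f1_def eps_d_def by simp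
  ultimately show ?thesis using \<open>i = 1\<close> by (simp add: f_def field_simps power2_eq_square power3_eq_cube)
qed

lemma sum_ecc_le_ecc_profile_longest_path:
  assumes conn: "connected_graph V E" and "mono h" and L: "longest_path V E P"
  shows "(\<Sum>u\<in>V. h (ecc V E u)) \<le> ecc_profile h (card V) (length P - 1)"
proof -
  have wP: "walk V E P" and dP: "distinct P" using L unfolding longest_path_def by auto
  have idx: "{..length P - 1} = {..<length P}" using walk_not_Nil[OF wP] by (cases P) auto
  show ?thesis
  proof (rule sum_le_ecc_profile[OF connected_graph_finite[OF conn] _ _ \<open>mono h\<close>])
    show "inj_on ((!) P) {..length P - 1}" unfolding idx using dP by (simp add: inj_on_nth)
    show "(!) P ` {..length P - 1} \<subseteq> V" unfolding idx using walk_nth_mem[OF wP] by auto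
    show "ecc V E (P ! j) \<le> max j (length P - 1 - j)" if "j \<le> length P - 1" for j
      using ecc_longest_path_nth[OF L conn] that idx by auto
    show "ecc V E u \<le> length P - 1" if "u \<in> V" for u
      by (rule ecc_le_longest_path[OF L conn that])
  qed
qed

lemma sum_ecc_less_ecc_profile_longest_path:
  assumes conn: "connected_graph V E" and "strict_mono h" and L: "longest_path V E P"
    and j0: "j0 < length P" "ecc V E (P ! j0) < max j0 (length P - 1 - j0)"
  shows "(\<Sum>u\<in>V. h (ecc V E u)) < ecc_profile h (card V) (length P - 1)"
proof -
  have wP: "walk V E P" and dP: "distinct P" using L unfolding longest_path_def by auto
  have idx: "{..length P - 1} = {..<length P}" using walk_not_Nil[OF wP] by (cases P) auto
  show ?thesis
  proof (rule sum_less_ecc_profile[OF connected_graph_finite[OF conn] _ _ \<open>strict_mono h\<close>])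
    show "inj_on ((!) P) {..length P - 1}" unfolding idx using dP by (simp add: inj_on_nth)
    show "(!) P ` {..length P - 1} \<subseteq> V" unfolding idx using walk_nth_mem[OF wP] by auto
    show "ecc V E (P ! j) \<le> max j (length P - 1 - j)" if "j \<le> length P - 1" for j
      using ecc_longest_path_nth[OF L conn] that idx by auto
    show "ecc V E u \<le> length P - 1" if "u \<in> V" for u
      by (rule ecc_le_longest_path[OF L conn that])
  qed (use j0 in auto)
qed

lemma sum_ecc_le_ecc_profile_matching_number:
  assumes conn: "connected_graph V E" and "mono h" and k: "2 * matching_number E < card V"
  shows "(\<Sum>u\<in>V. h (ecc V E u)) \<le> ecc_profile h (card V) (2 * matching_number E)"
proof -
  have "finite V" "V \<noteq> {}" using conn by (auto simp: connected_graph_finite connected_graph_nonempty)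
  then obtain P where L: "longest_path V E P" by (rule longest_path_exists)
  then have "length P \<le> Suc (2 * matching_number E)"
    using conn path_length_le_matching_number simple_graph_finite_edges
    unfolding longest_path_def connected_graph_def by blast
  then have "ecc_profile h (card V) (length P - 1) \<le> ecc_profile h (card V) (2 * matching_number E)"
    by (intro ecc_profile_mono[OF \<open>mono h\<close> _ k]) simp
  then show ?thesis using sum_ecc_le_ecc_profile_longest_path[OF conn \<open>mono h\<close> L] by simp
qed

lemma sum_ecc_le_ecc_profile_card:
  assumes conn: "connected_graph V E" and "mono h"
  shows "(\<Sum>u\<in>V. h (ecc V E u)) \<le> ecc_profile h (card V) (card V - 1)"
proof -
  have fin: "finite V" "V \<noteq> {}" using conn by (auto simp: connected_graph_finite connected_graph_nonempty)
  then obtain P where L: "longest_path V E P" by (rule longest_path_exists)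
  then have wP: "walk V E P" and "distinct P" unfolding longest_path_def by auto
  then have "length P \<le> card V" by (rule distinct_walk_length_le_card[OF fin(1)])
  moreover have "P \<noteq> []" by (rule walk_not_Nil[OF wP])
  ultimately have "ecc_profile h (card V) (length P - 1) \<le> ecc_profile h (card V) (card V - 1)"
    by (intro ecc_profile_mono[OF \<open>mono h\<close>]) (use fin in \<open>auto simp: card_gt_0_iff\<close>)
  then show ?thesis using sum_ecc_le_ecc_profile_longest_path[OF conn \<open>mono h\<close> L] by simp
qed

section \<open>Double brooms\<close>

definition path_edges :: "'a list \<Rightarrow> 'a set set" where
  "path_edges P = {{P ! j, P ! Suc j} | j. Suc j < length P}"

lemma walk_path_edges: "P \<noteq> [] \<Longrightarrow> set P \<subseteq> V \<Longrightarrow> path_edges P \<subseteq> E \<Longrightarrow> walk V E P"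
  unfolding walk_def path_edges_def by blast

locale double_broom_on =
  fixes V :: "'a set" and E :: "'a set set" and ps :: "'a list" and A B :: "'a set"
  assumes finite: "finite V" and ps_not_Nil: "ps \<noteq> []" and distinct_ps: "distinct ps"
    and disjoint: "A \<inter> set ps = {}" "B \<inter> set ps = {}" "A \<inter> B = {}"
    and vertices: "V = set ps \<union> A \<union> B"
    and edges: "E = path_edges ps \<union> {{hd ps, a} | a. a \<in> A} \<union> {{last ps, b} | b. b \<in> B}"
begin

text \<open>The spine is a diametral path: \<open>ps\<close> extended by one leaf at each end that has leaves. The
  level of a vertex is its position on the spine, leaves being placed at the end they hang from.\<close>

definition a0 :: 'a where "a0 = (SOME a. a \<in> A)"
definition b0 :: 'a where "b0 = (SOME b. b \<in> B)"
definition offset :: nat where "offset = (if A = {} then 0 else 1)"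

definition spine :: "'a list" where
  "spine = (if A = {} then [] else [a0]) @ ps @ (if B = {} then [] else [b0])"

definition D :: nat where "D = length spine - 1"

definition level :: "'a \<Rightarrow> nat" where
  "level u = (if u \<in> A then 0 else if u \<in> B then D else the_inv_into {..D} ((!) spine) u)"

lemma a0: "A \<noteq> {} \<Longrightarrow> a0 \<in> A" unfolding a0_def by (rule someI_ex) blast
lemma b0: "B \<noteq> {} \<Longrightarrow> b0 \<in> B" unfolding b0_def by (rule someI_ex) blast

lemma length_spine: "length spine = Suc D"
  and D_eq: "D = offset + (length ps - 1) + (if B = {} then 0 else 1)"
  using ps_not_Nil by (auto simp: D_def spine_def offset_def)

lemma spine_nth_offset: "j < length ps \<Longrightarrow> spine ! (offset + j) = ps ! j"
  by (simp add: spine_def offset_def nth_append)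

lemma spine_0: "A \<noteq> {} \<Longrightarrow> spine ! 0 = a0"
  by (simp add: spine_def)

lemma spine_D: "B \<noteq> {} \<Longrightarrow> spine ! D = b0"
  using length_spine by (simp add: spine_def nth_append D_def)

lemma hd_ps_eq: "hd ps = spine ! offset"
  using spine_nth_offset[of 0] ps_not_Nil by (simp add: hd_conv_nth)

lemma last_ps_eq: "last ps = spine ! (offset + (length ps - 1))"
  using spine_nth_offset[of "length ps - 1"] ps_not_Nil by (simp add: last_conv_nth)

lemma set_spine: "set spine = set ps \<union> (if A = {} then {} else {a0}) \<union> (if B = {} then {} else {b0})"
  by (auto simp: spine_def)

lemma distinct_spine: "distinct spine"
proof -
  have a: "A \<noteq> {} \<Longrightarrow> a0 \<notin> set ps" and b: "B \<noteq> {} \<Longrightarrow> b0 \<notin> set ps"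
    and ab: "A \<noteq> {} \<Longrightarrow> a0 \<notin> B"
    using a0 b0 disjoint by blast+
  have "A \<noteq> {} \<Longrightarrow> B \<noteq> {} \<Longrightarrow> a0 \<noteq> b0" using ab b0 by auto
  with a b distinct_ps show ?thesis unfolding spine_def by (simp add: distinct_append)
qed

lemma set_spine_subset: "set spine \<subseteq> V"
  using a0 b0 vertices by (auto simp: set_spine)

lemma walk_spine: "walk V E spine"
proof -
  have ps: "walk V E ps" using ps_not_Nil vertices edges by (intro walk_path_edges) auto
  have "walk V E (ps @ [b0])" if "B \<noteq> {}"
    by (rule walk_append[OF ps]) (use that b0 vertices edges in auto)
  then have psb: "walk V E (ps @ (if B = {} then [] else [b0]))" using ps by simp
  show ?thesis
  proof (cases "A = {}")
    case False
    have "{last [a0], hd (ps @ (if B = {} then [] else [b0]))} \<in> E"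
      using False a0 edges ps_not_Nil by (auto simp: insert_commute)
    moreover have "walk V E [a0]" using False a0 vertices by simp
    ultimately have "walk V E ([a0] @ ps @ (if B = {} then [] else [b0]))"
      using walk_append psb by blast
    then show ?thesis using False by (simp add: spine_def)
  qed (unfold spine_def, use psb in simp)
qed

lemma level_spine: "j \<le> D \<Longrightarrow> level (spine ! j) = j"
proof -
  assume j: "j \<le> D"
  have index: "spine ! i = spine ! j \<Longrightarrow> i \<le> D \<Longrightarrow> i = j" for i
    using distinct_spine j length_spine by (simp add: nth_eq_iff_index_eq)
  have mem: "spine ! j \<in> set spine" using j length_spine by simp
  show ?thesis
  proof (cases "spine ! j \<in> A")
    case True
    then have "spine ! j = a0" using mem disjoint b0 by (auto simp: set_spine split: if_splits)
    then show ?thesis using True index[of 0] spine_0 unfolding level_def by auto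
  next
    case notA: False
    show ?thesis
    proof (cases "spine ! j \<in> B")
      case True
      then have "spine ! j = b0" using mem disjoint a0 by (auto simp: set_spine split: if_splits)
      then show ?thesis using True notA index[of D] spine_D unfolding level_def by auto
    next
      case False
      have "inj_on ((!) spine) {..D}" using distinct_spine length_spine by (intro inj_on_nth) auto
      then show ?thesis using notA False j unfolding level_def by (simp add: the_inv_into_f_f)
    qed
  qed
qed

lemma level_edge:
  assumes "{x, y} \<in> E"
  shows "level x \<le> Suc (level y)"
proof -
  consider (path) j where "{x, y} = {ps ! j, ps ! Suc j}" "Suc j < length ps"
    | (left) a where "{x, y} = {hd ps, a}" "a \<in> A" | (right) b where "{x, y} = {last ps, b}" "b \<in> B"
    using assms unfolding edges path_edges_def by blast
  then show ?thesis
  proof cases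
    case path
    have "offset + Suc j \<le> D" using path(2) D_eq by auto
    then have "level (ps ! j) = offset + j" "level (ps ! Suc j) = offset + Suc j"
      using level_spine[of "offset + j"] level_spine[of "offset + Suc j"]
        spine_nth_offset[of j] spine_nth_offset[of "Suc j"] path(2) by auto
    then show ?thesis using path(1) by (auto simp: doubleton_eq_iff)
  next
    case left
    then have "offset = 1" by (auto simp: offset_def)
    then have "level (hd ps) = 1" using level_spine[of 1] hd_ps_eq D_eq by simp
    moreover have "level a = 0" using left(2) by (simp add: level_def)
    ultimately show ?thesis using left(1) by (auto simp: doubleton_eq_iff)
  next
    case right
    then have "offset + (length ps - 1) = D - 1" using D_eq by auto
    then have "level (last ps) = D - 1" using level_spine[of "D - 1"] last_ps_eq by simp
    moreover have "level b = D" using right(2) disjoint(3) by (auto simp: level_def)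
    ultimately show ?thesis using right(1) by (auto simp: doubleton_eq_iff)
  qed
qed

lemma off_spine:
  assumes "u \<in> V" "u \<notin> set spine"
  shows "1 \<le> D \<and> (level u = 0 \<and> {u, spine ! 1} \<in> E \<or> level u = D \<and> {u, spine ! (D - 1)} \<in> E)"
proof -
  have "u \<in> A \<or> u \<in> B" using assms vertices by (auto simp: set_spine)
  then show ?thesis
  proof
    assume u: "u \<in> A"
    then have "offset = 1" by (auto simp: offset_def)
    then have "{u, spine ! 1} \<in> E" "1 \<le> D" using u hd_ps_eq D_eq unfolding edges by (auto simp: insert_commute)
    moreover have "level u = 0" using u by (simp add: level_def)
    ultimately show ?thesis by simp
  next
    assume u: "u \<in> B"
    then have "offset + (length ps - 1) = D - 1" "1 \<le> D" using D_eq by auto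
    then have "{u, spine ! (D - 1)} \<in> E" using u last_ps_eq unfolding edges by (auto simp: insert_commute)
    moreover have "level u = D" using u disjoint(3) by (auto simp: level_def)
    ultimately show ?thesis using \<open>1 \<le> D\<close> by simp
  qed
qed

lemma walk_level:
  assumes "walk V E xs" "j < length xs"
  shows "level (xs ! 0) \<le> level (xs ! j) + j \<and> level (xs ! j) \<le> level (xs ! 0) + j"
  using assms(2)
proof (induction j)
  case (Suc j)
  have "{xs ! j, xs ! Suc j} \<in> E" using walk_edge[OF assms(1)] Suc by simp
  then have "level (xs ! j) \<le> Suc (level (xs ! Suc j))" "level (xs ! Suc j) \<le> Suc (level (xs ! j))"
    using level_edge[of "xs ! j"] level_edge[of "xs ! Suc j"] by (simp_all add: insert_commute)
  with Suc show ?case by auto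
qed simp

lemma level_le_gdist:
  assumes "reachable_within V E u w m"
  shows "level u \<le> level w + gdist V E u w \<and> level w \<le> level u + gdist V E u w"
proof -
  obtain xs where xs: "walk V E xs" "hd xs = u" "last xs = w" "length xs = Suc (gdist V E u w)"
    using assms by (rule gdist_shortest_walk)
  then have "xs ! 0 = u" "xs ! gdist V E u w = w" using walk_not_Nil[OF xs(1)] by (auto simp: hd_conv_nth last_conv_nth)
  then show ?thesis using walk_level[OF xs(1), of "gdist V E u w"] xs(4) by simp
qed

lemma reachable_within_spine:
  "i \<le> D \<Longrightarrow> j \<le> D \<Longrightarrow> reachable_within V E (spine ! i) (spine ! j) (i - j + (j - i))"
  using reachable_within_walk[OF walk_spine] length_spine by simp

lemma spine_anchor:
  assumes "u \<in> V"
  obtains j where "j \<le> D" "reachable_within V E u (spine ! j) (level u - j + (j - level u))"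
    "u \<in> set spine \<and> j = level u \<or> u \<notin> set spine \<and> (level u = 0 \<and> j = 1 \<or> level u = D \<and> j = D - 1)"
proof (cases "u \<in> set spine")
  case True
  then have "\<exists>j. j \<le> D \<and> u = spine ! j" using length_spine by (auto simp: in_set_conv_nth less_Suc_eq_le)
  then obtain j where j: "j \<le> D" "u = spine ! j" by blast
  moreover have "reachable_within V E u u 0" using assms by (rule reachable_within_refl)
  ultimately show ?thesis using that[of j] level_spine True by simp
next
  case False
  from off_spine[OF assms False] consider "1 \<le> D" "level u = 0" "{u, spine ! 1} \<in> E"
    | "1 \<le> D" "level u = D" "{u, spine ! (D - 1)} \<in> E" by (elim conjE disjE) simp_all
  then show ?thesis
  proof cases
    case 1
    have "reachable_within V E u (spine ! 1) 1"
      by (rule reachable_within_edge[OF 1(3) assms]) (use 1(1) length_spine set_spine_subset in auto)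
    then show ?thesis using that[of 1] 1 False by simp
  next
    case 2
    have "reachable_within V E u (spine ! (D - 1)) 1"
      by (rule reachable_within_edge[OF 2(3) assms]) (use length_spine set_spine_subset in auto)
    then show ?thesis using that[of "D - 1"] 2 False by simp
  qed
qed

lemma level_le_D: "u \<in> V \<Longrightarrow> level u \<le> D"
  by (rule spine_anchor) auto

text \<open>Leaves off the spine hang from its second and its penultimate vertex; the condition
  \<open>2 \<le> D\<close> excludes stars, in which two leaves are farther apart than \<open>D\<close>.\<close>

lemma gdist_le_level:
  assumes "u \<in> V" "w \<in> V"
  shows "gdist V E u w \<le> D + 2"
    and "V \<subseteq> set spine \<or> 2 \<le> D \<Longrightarrow> gdist V E u w \<le> max (level u) (D - level u)"
proof -
  obtain i where i: "i \<le> D" "reachable_within V E u (spine ! i) (level u - i + (i - level u))"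
    "u \<in> set spine \<and> i = level u \<or> u \<notin> set spine \<and> (level u = 0 \<and> i = 1 \<or> level u = D \<and> i = D - 1)"
    using spine_anchor[OF assms(1)] by blast
  obtain j where j: "j \<le> D" "reachable_within V E w (spine ! j) (level w - j + (j - level w))"
    "w \<in> set spine \<and> j = level w \<or> w \<notin> set spine \<and> (level w = 0 \<and> j = 1 \<or> level w = D \<and> j = D - 1)"
    using spine_anchor[OF assms(2)] by blast
  have bound: "gdist V E u w \<le> (level u - i + (i - level u)) + (i - j + (j - i)) + (level w - j + (j - level w))"
    using reachable_within_trans[OF reachable_within_trans[OF i(2) reachable_within_spine[OF i(1) j(1)]]
        reachable_within_sym[OF j(2)]]
    by (rule gdist_le)
  then show "gdist V E u w \<le> D + 2" using i(1,3) j(1,3) by auto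
  show "gdist V E u w \<le> max (level u) (D - level u)" if "V \<subseteq> set spine \<or> 2 \<le> D"
    using bound i(1,3) j(1,3) that assms by auto
qed

lemma ecc_eq_level:
  assumes cond: "V \<subseteq> set spine \<or> 2 \<le> D" and u: "u \<in> V"
  shows "ecc V E u = max (level u) (D - level u)"
proof (rule antisym)
  have V: "finite V" "V \<noteq> {}" using finite u by auto
  show "ecc V E u \<le> max (level u) (D - level u)"
    using gdist_le_level(2)[OF u _ cond] by (rule ecc_le[OF V])
  obtain i where i: "i \<le> D" "reachable_within V E u (spine ! i) (level u - i + (i - level u))"
    using spine_anchor[OF u] by blast
  have "reachable_within V E u (spine ! j) (level u - i + (i - level u) + (i - j + (j - i)))" if "j \<le> D" for j
    using reachable_within_trans[OF i(2) reachable_within_spine[OF i(1) that]] .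
  then have "level u \<le> gdist V E u (spine ! 0)" "D - level u \<le> gdist V E u (spine ! D)"
    using level_le_gdist level_spine[of 0] level_spine[of D] by fastforce+
  moreover have "spine ! 0 \<in> V" "spine ! D \<in> V" using set_spine_subset length_spine by auto
  ultimately show "max (level u) (D - level u) \<le> ecc V E u"
    using gdist_le_ecc[OF finite] by (meson le_trans max.boundedI)
qed

lemma ecc_le_D_plus_2: "u \<in> V \<Longrightarrow> ecc V E u \<le> D + 2"
  using finite gdist_le_level(1) by (intro ecc_le) auto

lemma Suc_D_le_card: "Suc D \<le> card V"
  using card_mono[OF finite set_spine_subset] distinct_card[OF distinct_spine] length_spine by simp

lemma sum_ecc_eq_ecc_profile:
  assumes cond: "V \<subseteq> set spine \<or> 2 \<le> D"
  shows "(\<Sum>u\<in>V. h (ecc V E u)) = ecc_profile h (card V) D"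
proof -
  have idx: "{..D} = {..<length spine}" using length_spine by auto
  show ?thesis
  proof (rule sum_eq_ecc_profile[OF finite])
    show "inj_on ((!) spine) {..D}" unfolding idx using distinct_spine by (simp add: inj_on_nth)
    show "(!) spine ` {..D} \<subseteq> V" unfolding idx using set_spine_subset by (auto simp: set_conv_nth[symmetric])
    show "ecc V E (spine ! j) = max j (D - j)" if "j \<le> D" for j
    proof -
      have "spine ! j \<in> V" using that length_spine set_spine_subset nth_mem[of j spine] by auto
      then show ?thesis using ecc_eq_level[OF cond] level_spine[OF that] by simp
    qed
    show "ecc V E u = D" if "u \<in> V - (!) spine ` {..D}" for u
    proof -
      have "u \<in> V" "u \<notin> set spine" using that unfolding idx by (auto simp: set_conv_nth)
      then show ?thesis using off_spine ecc_eq_level[OF cond] by force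
    qed
  qed
qed

lemma diameter_eq_D:
  assumes cond: "V \<subseteq> set spine \<or> 2 \<le> D"
  shows "diameter V E = D"
proof -
  have "ecc V E u \<le> D" if "u \<in> V" for u using ecc_eq_level[OF cond that] level_le_D[OF that] by simp
  moreover have "spine ! 0 \<in> V" using set_spine_subset length_spine by auto
  then have "D \<in> ecc V E ` V" using ecc_eq_level[OF cond] level_spine[of 0] by (force intro: rev_image_eqI)
  ultimately show ?thesis unfolding diameter_def by (intro Max_eqI) (use finite in auto)
qed

lemma diameter_le_D_plus_2: "diameter V E \<le> D + 2"
  unfolding diameter_def using finite ecc_le_D_plus_2 set_spine_subset length_spine
  by (subst Max_le_iff) auto

end

lemma sum_ecc_double_broom:
  assumes "double_broom V E" "3 < diameter V E"
  shows "(\<Sum>u\<in>V. h (ecc V E u)) = ecc_profile h (card V) (diameter V E)" and "diameter V E < card V"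
proof -
  obtain ps A B where "double_broom_on V E ps A B"
    using assms(1) unfolding double_broom_def double_broom_on_def path_edges_def by blast
  then interpret double_broom_on V E ps A B .
  have "2 \<le> D" using diameter_le_D_plus_2 assms(2) by simp
  then show "(\<Sum>u\<in>V. h (ecc V E u)) = ecc_profile h (card V) (diameter V E)" and "diameter V E < card V"
    using sum_ecc_eq_ecc_profile diameter_eq_D Suc_D_le_card by auto
qed

lemma sum_ecc_path_edges:
  assumes "distinct P" "P \<noteq> []"
  shows "(\<Sum>u\<in>set P. h (ecc (set P) (path_edges P) u)) = ecc_profile h (length P) (length P - 1)"
proof -
  interpret double_broom_on "set P" "path_edges P" P "{}" "{}"
    using assms by unfold_locales auto
  show ?thesis using sum_ecc_eq_ecc_profile D_eq distinct_card[OF assms(1)] by (simp add: set_spine offset_def)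
qed

section \<open>Paths\<close>

lemma graph_iso_path_if_path_edges:
  assumes "distinct P" "V = set P" "E = path_edges P"
  shows "graph_iso V E (path_V (length P)) (path_E (length P))"
proof -
  have bij: "bij_betw ((!) P) {..<length P} V" using assms(1,2) by (intro bij_betw_nth) auto
  define f where "f = the_inv_into {..<length P} ((!) P)"
  have f: "f (P ! a) = a" if "a < length P" for a
    unfolding f_def using bij that by (simp add: bij_betw_def the_inv_into_f_f)
  have "{u, v} \<in> E \<longleftrightarrow> {f u, f v} \<in> path_E (length P)" if uv: "u \<in> V" "v \<in> V" for u v
  proof -
    obtain a b where ab: "a < length P" "b < length P" "u = P ! a" "v = P ! b"
      using uv assms(2) by (auto simp: in_set_conv_nth)
    have "{P ! a, P ! b} = {P ! j, P ! Suc j} \<longleftrightarrow> {a, b} = {j, Suc j}" if "Suc j < length P" for j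
      using ab that assms(1) by (auto simp: doubleton_eq_iff nth_eq_iff_index_eq)
    then show ?thesis using ab f unfolding assms(3) path_edges_def path_E_def by auto
  qed
  moreover have "bij_betw f V (path_V (length P))"
    unfolding f_def path_V_def using bij_betw_the_inv_into[OF bij] by (simp add: atLeast0LessThan)
  ultimately show ?thesis unfolding graph_iso_def by blast
qed

lemma path_edges_if_graph_iso:
  assumes G: "simple_graph V E" and iso: "graph_iso V E (path_V n) (path_E n)"
  obtains P where "distinct P" "V = set P" "length P = n" "E = path_edges P"
proof -
  obtain f where bij: "bij_betw f V {..<n}"
    and adj: "\<forall>u\<in>V. \<forall>v\<in>V. {u, v} \<in> E \<longleftrightarrow> {f u, f v} \<in> path_E n"
    using iso unfolding graph_iso_def path_V_def by (auto simp: atLeast0LessThan)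
  define g where "g = inv_into V f"
  have g: "bij_betw g {..<n} V" unfolding g_def by (rule bij_betw_inv_into[OF bij])
  have fg: "j < n \<Longrightarrow> f (g j) = j" and gf: "u \<in> V \<Longrightarrow> g (f u) = u" for j u
    unfolding g_def using bij by (auto simp: bij_betw_def f_inv_into_f inv_into_f_f)
  define P where "P = map g [0..<n]"
  have P: "distinct P" "V = set P" "length P = n"
    unfolding P_def using g by (auto simp: bij_betw_def distinct_map atLeast0LessThan)
  have "E = path_edges P"
  proof
    show "E \<subseteq> path_edges P"
    proof
      fix e assume "e \<in> E"
      then obtain u v where uv: "e = {u, v}" "u \<in> V" "v \<in> V" using G unfolding simple_graph_def by blast
      then obtain j where j: "{f u, f v} = {j, Suc j}" "Suc j < n" using adj \<open>e \<in> E\<close> unfolding path_E_def by blast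
      then consider "f u = j" "f v = Suc j" | "f u = Suc j" "f v = j" by (auto simp: doubleton_eq_iff)
      then have "e = {g j, g (Suc j)}" using uv gf[OF uv(2)] gf[OF uv(3)] by cases (auto simp: insert_commute)
      moreover have "P ! j = g j" "P ! Suc j = g (Suc j)" using j(2) by (simp_all add: P_def)
      ultimately show "e \<in> path_edges P" using j(2) P(3) unfolding path_edges_def by (auto intro!: exI[of _ j])
    qed
    show "path_edges P \<subseteq> E"
    proof
      fix e assume "e \<in> path_edges P"
      then obtain j where j: "e = {g j, g (Suc j)}" "Suc j < n" unfolding P_def path_edges_def by auto
      then have "{f (g j), f (g (Suc j))} \<in> path_E n" using fg unfolding path_E_def by auto
      then show "e \<in> E" using adj g j unfolding bij_betw_def by auto
    qed
  qed
  with P show ?thesis by (rule that)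
qed

text \<open>A chord skipping a vertex of a Hamiltonian path shortcuts the path from its first vertex.\<close>

lemma ecc_hd_le_if_chord:
  assumes wP: "walk V E P" and VP: "V = set P"
    and chord: "{P ! a, P ! b} \<in> E" "Suc a < b" "b < length P"
  shows "ecc V E (P ! 0) \<le> length P - 2"
proof (rule ecc_le)
  show "finite V" "V \<noteq> {}" using VP chord by auto
  fix w assume "w \<in> V"
  then obtain m where m: "m < length P" "w = P ! m" using VP by (auto simp: in_set_conv_nth)
  show "gdist V E (P ! 0) w \<le> length P - 2"
  proof (cases "m = length P - 1")
    case True
    let ?W = "take (Suc a) P @ drop b P"
    have "last (take (Suc a) P) = P ! a" using chord by (simp add: take_Suc_conv_app_nth)
    then have "walk V E ?W"
      using walk_append[OF walk_take[OF wP, of "Suc a"] walk_drop[OF wP chord(3)]] chord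
      by (simp add: hd_drop_conv_nth)
    moreover have "hd ?W = P ! 0" "last ?W = w" "length ?W \<le> Suc (length P - 2)"
      using chord m True by (auto simp: hd_conv_nth last_conv_nth nth_append)
    ultimately show ?thesis by (intro gdist_le reachable_withinI)
  next
    case False
    have "0 < length P" using m(1) by linarith
    from gdist_le[OF reachable_within_walk[OF wP this m(1)]] have "gdist V E (P ! 0) w \<le> m" using m(2) by simp
    then show ?thesis using False m(1) by linarith
  qed
qed

lemma sum_ecc_eq_ecc_profile_card_iff:
  assumes conn: "connected_graph V E" and "strict_mono h"
  shows "(\<Sum>u\<in>V. h (ecc V E u)) = ecc_profile h (card V) (card V - 1)
    \<longleftrightarrow> graph_iso V E (path_V (card V)) (path_E (card V))"
proof
  have fin: "finite V" "V \<noteq> {}" using conn by (auto simp: connected_graph_finite connected_graph_nonempty)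
  show "(\<Sum>u\<in>V. h (ecc V E u)) = ecc_profile h (card V) (card V - 1)"
    if iso: "graph_iso V E (path_V (card V)) (path_E (card V))"
  proof -
    have "simple_graph V E" using conn unfolding connected_graph_def by blast
    then obtain P where "distinct P" "V = set P" "length P = card V" "E = path_edges P"
      using iso by (rule path_edges_if_graph_iso)
    then show ?thesis using sum_ecc_path_edges[of P h] fin by auto
  qed
  assume eq: "(\<Sum>u\<in>V. h (ecc V E u)) = ecc_profile h (card V) (card V - 1)"
  obtain P where L: "longest_path V E P" using longest_path_exists[OF fin] by blast
  have wP: "walk V E P" and dP: "distinct P" using L unfolding longest_path_def by auto
  have "length P = card V"
  proof (rule ccontr)
    assume "length P \<noteq> card V"
    then have "length P - 1 < card V - 1"
      using distinct_walk_length_le_card[OF fin(1) wP dP] walk_not_Nil[OF wP] by (cases P) auto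
    then have "ecc_profile h (card V) (length P - 1) < ecc_profile h (card V) (card V - 1)"
      by (rule ecc_profile_strict_mono[OF \<open>strict_mono h\<close>]) (use fin in \<open>auto simp: card_gt_0_iff\<close>)
    then show False using sum_ecc_le_ecc_profile_longest_path[OF conn strict_mono_mono[OF \<open>strict_mono h\<close>] L] eq
      by simp
  qed
  moreover have VP: "V = set P"
    using card_subset_eq[OF fin(1)] wP distinct_card[OF dP] \<open>length P = card V\<close> by (auto simp: walk_def)
  moreover have "E = path_edges P"
  proof
    show "path_edges P \<subseteq> E" using walk_edge[OF wP] unfolding path_edges_def by blast
    show "E \<subseteq> path_edges P"
    proof
      fix e assume e: "e \<in> E"
      obtain a b where ab: "a < b" "b < length P" "e = {P ! a, P ! b}"
      proof -
        obtain u v where "e = {u, v}" "u \<noteq> v" "u \<in> V" "v \<in> V"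
          using e conn unfolding connected_graph_def simple_graph_def by blast
        then obtain a b where "a < length P" "b < length P" "a \<noteq> b" "e = {P ! a, P ! b}"
          using VP by (auto simp: in_set_conv_nth)
        then show ?thesis using that[of a b] that[of b a] by (cases "a < b") (auto simp: insert_commute)
      qed
      show "e \<in> path_edges P"
      proof (cases "b = Suc a")
        case True then show ?thesis using ab unfolding path_edges_def by blast
      next
        case False
        then have "ecc V E (P ! 0) < max 0 (length P - 1 - 0)"
          using ecc_hd_le_if_chord[OF wP VP, of a b] e ab by simp
        then show ?thesis
          using sum_ecc_less_ecc_profile_longest_path[OF conn \<open>strict_mono h\<close> L, of 0] eq ab
            \<open>length P = card V\<close> by simp
      qed
    qed
  qed
  ultimately show "graph_iso V E (path_V (card V)) (path_E (card V))"
    using graph_iso_path_if_path_edges[OF dP] by simp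
qed

lemma sum_ecc_path:
  assumes "0 < n"
  shows "(\<Sum>u\<in>path_V n. h (ecc (path_V n) (path_E n) u)) = ecc_profile h n (n - 1)"
proof -
  have "path_E n = path_edges [0..<n]"
    unfolding path_E_def path_edges_def by (auto simp del: upt_Suc) (metis Suc_lessD nth_upt add_0)+
  then show ?thesis using sum_ecc_path_edges[of "[0..<n]" h] assms by (simp add: path_V_def atLeast0LessThan)
qed

section \<open>The eccentricity indices\<close>

lemma sigma_eq_sum_ecc:
  assumes "i \<in> {0, 1}"
  shows "sigma i V E = real (\<Sum>u\<in>V. ecc V E u ^ Suc i) / (if i = 0 then real (card V) else 1)"
  using assms by (auto simp: sigma_def sigma0_def sigma1_def power2_eq_square)

lemma strict_mono_power_Suc: "strict_mono (\<lambda>x :: nat. x ^ Suc i)"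
  by (intro strict_monoI power_strict_mono) auto

lemma sigma_le_f_matching_number:
  assumes "i \<in> {0, 1}" "connected_graph V E" "2 * matching_number E < card V"
  shows "sigma i V E \<le> f i (card V) (2 * matching_number E)"
proof -
  have "(\<Sum>u\<in>V. ecc V E u ^ Suc i) \<le> ecc_profile (\<lambda>x. x ^ Suc i) (card V) (2 * matching_number E)"
    using sum_ecc_le_ecc_profile_matching_number[OF assms(2) strict_mono_mono[OF strict_mono_power_Suc] assms(3)] .
  then show ?thesis
    unfolding sigma_eq_sum_ecc[OF assms(1)] f_eq_ecc_profile[OF assms(1,3)]
    by (intro divide_right_mono) (simp_all del: of_nat_sum)
qed

lemma sigma_double_broom:
  assumes "i \<in> {0, 1}" "double_broom V E" "diameter V E = 2 * m" "2 \<le> m"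
  shows "sigma i V E = f i (card V) (2 * m)"
proof -
  have "3 < diameter V E" using assms(3,4) by simp
  then have sum: "(\<Sum>u\<in>V. ecc V E u ^ Suc i) = ecc_profile (\<lambda>x. x ^ Suc i) (card V) (2 * m)"
    and "2 * m < card V"
    using sum_ecc_double_broom[OF assms(2)] assms(3) by simp_all
  show ?thesis unfolding sigma_eq_sum_ecc[OF assms(1)] f_eq_ecc_profile[OF assms(1) \<open>2 * m < card V\<close>] sum ..
qed

lemma sigma_path:
  assumes "i \<in> {0, 1}" "0 < n"
  shows "sigma i (path_V n) (path_E n) = real (ecc_profile (\<lambda>x. x ^ Suc i) n (n - 1)) / (if i = 0 then real n else 1)"
proof -
  have "card (path_V n) = n" by (simp add: path_V_def)
  then show ?thesis unfolding sigma_eq_sum_ecc[OF assms(1)] sum_ecc_path[OF assms(2), of "\<lambda>x. x ^ Suc i"] by simp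
qed

lemma sigma_le_path:
  assumes "i \<in> {0, 1}" "connected_graph V E"
  shows "sigma i V E \<le> sigma i (path_V (card V)) (path_E (card V))"
    and "sigma i V E = sigma i (path_V (card V)) (path_E (card V)) \<longleftrightarrow> graph_iso V E (path_V (card V)) (path_E (card V))"
proof -
  have n: "0 < card V" using assms(2) connected_graph_finite connected_graph_nonempty card_gt_0_iff by blast
  have "(\<Sum>u\<in>V. ecc V E u ^ Suc i) \<le> ecc_profile (\<lambda>x. x ^ Suc i) (card V) (card V - 1)"
    using sum_ecc_le_ecc_profile_card[OF assms(2) strict_mono_mono[OF strict_mono_power_Suc]] .
  then show "sigma i V E \<le> sigma i (path_V (card V)) (path_E (card V))"
    unfolding sigma_eq_sum_ecc[OF assms(1), of V E] sigma_path[OF assms(1) n]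
    by (intro divide_right_mono) (simp_all del: of_nat_sum)
  show "sigma i V E = sigma i (path_V (card V)) (path_E (card V)) \<longleftrightarrow> graph_iso V E (path_V (card V)) (path_E (card V))"
    unfolding sigma_eq_sum_ecc[OF assms(1), of V E] sigma_path[OF assms(1) n]
      sum_ecc_eq_ecc_profile_card_iff[OF assms(2) strict_mono_power_Suc[of i], symmetric]
    using n by (simp del: of_nat_sum)
qed

theorem theorem5p4:
  fixes V :: "'a set" and E :: "'a set set" and i n k :: nat
  assumes "i \<in> {0, 1}"
    and "connected_graph V E"
    and "card V = n"
    and "matching_number E = k"
  shows "(2 \<le> k \<and> k < n div 2 \<longrightarrow>
            sigma i V E \<le> f i n (2 * k) \<and>
            (\<forall>(V' :: 'b set) E'. double_broom V' E' \<and> card V' = n \<and> diameter V' E' = 2 * k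
               \<longrightarrow> sigma i V' E' = f i n (2 * k)))
       \<and> (k = n div 2 \<longrightarrow>
            sigma i V E \<le> sigma i (path_V n) (path_E n) \<and>
            (sigma i V E = sigma i (path_V n) (path_E n) \<longleftrightarrow> graph_iso V E (path_V n) (path_E n)))"
proof -
  have "sigma i V E \<le> f i n (2 * k)" if "k < n div 2"
    using sigma_le_f_matching_number[OF assms(1,2)] assms(3,4) that by fastforce
  moreover have "sigma i V' E' = f i n (2 * k)"
    if "double_broom V' E'" "card V' = n" "diameter V' E' = 2 * k" "2 \<le> k" for V' :: "'b set" and E'
    using sigma_double_broom[OF assms(1) that(1,3,4)] that(2) by simp
  \<comment> \<open>The path bounds hold for every connected graph.\<close>
  moreover have "sigma i V E \<le> sigma i (path_V n) (path_E n)"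
    and "sigma i V E = sigma i (path_V n) (path_E n) \<longleftrightarrow> graph_iso V E (path_V n) (path_E n)"
    using sigma_le_path[OF assms(1,2)] assms(3) by simp_all
  ultimately show ?thesis by blast
qed

end
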